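(* Let $\mathcal{C}$ be a self-dual CSS code on $n$ qubits (i.e., its $X$-type and $Z$-type stabilizer groups are $\{X_S : S\in\mathcal{S}\}$ and $\{Z_S : S \in \mathcal{S}\}$ for the same family $\mathcal S$ of subsets of $\{1,\dots,n\}$). Let $\sigma$ be a permutation of $\{1,\dots,n\}$ such that permuting the qubits by $\sigma$ maps the code space to itself. Let $U = \prod_{i:\, \sigma(i)\neq i} \mathrm{CZ}_{i,\sigma(i)}$ (one $\mathrm{CZ}$ gate for each such $i$, so that for a $2$-cycle $(i,j)$ of $\sigma$ the two gates $\mathrm{CZ}_{i,j}$ and $\mathrm{CZ}_{j,i}$ both appear). Then there is a Pauli operator $P$ that is a product of $Z$ operators such that $PU$ maps the code space to itself.
   Context: $\mathrm{CZ}_{a,b} = \mathbb 1 - 2|11\rangle\langle 11|$ on qubits $a,b$; it is symmetric in $a,b$. $X_S = \prod_{i\in S} X_i$, $Z_S = \prod_{i\in S}Z_i$. *)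

theory Defs
  imports Complex_Main "HOL-Combinatorics.Permutations"
begin

text \<open>n-qubit states on qubits 1..n: a computational basis state is given by the
set x of qubits in state 1; a state is a complex amplitude function on such sets,
vanishing outside subsets of {1..n}.\<close>

type_synonym state = "nat set \<Rightarrow> complex"

definition states :: "nat \<Rightarrow> state set" where
  "states n = {\<psi>. \<forall>x. \<not> x \<subseteq> {1..n} \<longrightarrow> \<psi> x = 0}"

definition X_op :: "nat set \<Rightarrow> state \<Rightarrow> state" where
  "X_op S \<psi> = (\<lambda>x. \<psi> ((x - S) \<union> (S - x)))"

definition Z_op :: "nat set \<Rightarrow> state \<Rightarrow> state" where
  "Z_op S \<psi> = (\<lambda>x. (-1) ^ card (x \<inter> S) * \<psi> x)"

text \<open>Permutation of qubits: basis state |x> goes to |sigma(x)>.\<close>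
definition perm_op :: "(nat \<Rightarrow> nat) \<Rightarrow> state \<Rightarrow> state" where
  "perm_op \<sigma> \<psi> = (\<lambda>y. \<psi> (inv \<sigma> ` y))"

definition cz_phase :: "nat \<Rightarrow> nat \<Rightarrow> nat set \<Rightarrow> complex" where
  "cz_phase a b x = (if a \<in> x \<and> b \<in> x then -1 else 1)"

definition CZ :: "nat \<Rightarrow> nat \<Rightarrow> state \<Rightarrow> state" where
  "CZ a b \<psi> = (\<lambda>x. cz_phase a b x * \<psi> x)"

text \<open>All factors are
diagonal in the computational basis, so the product is the diagonal operator whose
phase is the product of the individual phases.\<close>
definition U_op :: "nat \<Rightarrow> (nat \<Rightarrow> nat) \<Rightarrow> state \<Rightarrow> state" where
  "U_op n \<sigma> \<psi> = (\<lambda>x. (\<Prod>i\<in>{i\<in>{1..n}. \<sigma> i \<noteq> i}. cz_phase i (\<sigma> i) x) * \<psi> x)"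

text \<open>Self-dual CSS code: stabilizer group {X_S, Z_S : S in family} where the family is
a group under symmetric difference of subsets of {1..n}, and X_S, Z_T commute.\<close>
definition self_dual_css :: "nat \<Rightarrow> nat set set \<Rightarrow> bool" where
  "self_dual_css n \<S> \<longleftrightarrow>
     (\<forall>S\<in>\<S>. S \<subseteq> {1..n}) \<and> {} \<in> \<S> \<and>
     (\<forall>S\<in>\<S>. \<forall>T\<in>\<S>. (S - T) \<union> (T - S) \<in> \<S>) \<and>
     (\<forall>S\<in>\<S>. \<forall>T\<in>\<S>. even (card (S \<inter> T)))"

definition code_space :: "nat \<Rightarrow> nat set set \<Rightarrow> state set" where
  "code_space n \<S> = {\<psi> \<in> states n. \<forall>S\<in>\<S>. X_op S \<psi> = \<psi> \<and> Z_op S \<psi> = \<psi>}"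

end

theory Submission
  imports Defs
begin

text \<open>Take \<open>T\<close> to be the set of fixed points of \<open>\<sigma>\<close>. Then \<open>Z\<^sub>T U\<close> is diagonal with phase
\<open>q(y) = B(y, y)\<close>, where \<open>B(a, b) = (-1)^|{i \<in> a. \<sigma> i \<in> b}|\<close> is bilinear over symmetric
difference. Hence \<open>q(y \<triangle> S) = q(y) B(y, S) B(S, y) B(S, S)\<close>. Since \<open>\<sigma>\<close> preserves the code,
it permutes the stabilizer family, so \<open>B(y, S) = (-1)^|y \<inter> \<sigma>\<^sup>-\<^sup>1 S|\<close> and
\<open>B(S, y) = (-1)^|\<sigma> S \<inter> y|\<close> are \<open>1\<close> for every basis state \<open>y\<close> in the support of a codeword
(the \<open>Z\<close>-stabilizers force \<open>y\<close> to be orthogonal to the family), and \<open>B(S, S) = 1\<close> by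
self-duality. So \<open>q\<close> is constant on the \<open>X\<close>-orbits of the support and \<open>Z\<^sub>T U\<close> preserves
the code space.\<close>

lemma self_dual_css_finite:
  assumes "self_dual_css n \<S>"
  shows "finite \<S>"
proof -
  have "\<S> \<subseteq> Pow {1..n}"
    using assms unfolding self_dual_css_def by auto
  then show ?thesis
    using finite_subset by blast
qed

lemma self_dual_css_sym_diff_mem_iff:
  assumes "self_dual_css n \<S>" and "S \<in> \<S>"
  shows "sym_diff x S \<in> \<S> \<longleftrightarrow> x \<in> \<S>"
proof
  assume "sym_diff x S \<in> \<S>"
  with assms have "sym_diff (sym_diff x S) S \<in> \<S>"
    unfolding self_dual_css_def by blast
  moreover have "sym_diff (sym_diff x S) S = x"
    by auto
  ultimately show "x \<in> \<S>"
    by simp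
next
  assume "x \<in> \<S>"
  with assms show "sym_diff x S \<in> \<S>"
    unfolding self_dual_css_def by blast
qed

lemma self_dual_css_orthogonal:
  assumes "self_dual_css n \<S>" and "S \<in> \<S>" and "R \<in> \<S>"
  shows "even (card (S \<inter> R))"
  using assms unfolding self_dual_css_def by blast

lemma code_space_support_subset:
  assumes "\<psi> \<in> code_space n \<S>" and "\<psi> y \<noteq> 0"
  shows "y \<subseteq> {1..n}"
  using assms unfolding code_space_def states_def by blast

lemma code_space_support_orthogonal:
  assumes "\<psi> \<in> code_space n \<S>" and "S \<in> \<S>" and "\<psi> y \<noteq> 0"
  shows "even (card (y \<inter> S))"
proof (rule ccontr)
  assume "odd (card (y \<inter> S))"
  moreover have "Z_op S \<psi> y = \<psi> y"
    using assms(1,2) unfolding code_space_def by auto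
  ultimately have "- \<psi> y = \<psi> y"
    unfolding Z_op_def by simp
  with assms(3) show False
    by simp
qed

lemma indicator_in_code_space:
  assumes "self_dual_css n \<S>"
  shows "(\<lambda>x. if x \<in> \<S> then 1 else 0) \<in> code_space n \<S>"
  unfolding code_space_def states_def
proof (intro CollectI conjI allI impI ballI ext)
  fix x
  assume "\<not> x \<subseteq> {1..n}"
  then show "(if x \<in> \<S> then 1 else 0) = 0"
    using assms unfolding self_dual_css_def by auto
next
  fix S x
  assume S: "S \<in> \<S>"
  show "X_op S (\<lambda>x. if x \<in> \<S> then 1 else 0) x = (if x \<in> \<S> then 1 else 0)"
    unfolding X_op_def using self_dual_css_sym_diff_mem_iff[OF assms S] by simp
  show "Z_op S (\<lambda>x. if x \<in> \<S> then 1 else 0) x = (if x \<in> \<S> then 1 else 0)"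
    unfolding Z_op_def using self_dual_css_orthogonal[OF assms _ S] by auto
qed

text \<open>Applied to the indicator codeword of the family, a code-preserving qubit permutation
must map the family into itself; finiteness upgrades this to a bijection.\<close>

lemma code_preserving_permutation_image:
  assumes css: "self_dual_css n \<S>" and perm: "\<sigma> permutes {1..n}"
    and preserves: "\<forall>\<psi>\<in>code_space n \<S>. perm_op \<sigma> \<psi> \<in> code_space n \<S>"
    and S: "S \<in> \<S>"
  shows "inv \<sigma> ` S \<in> \<S>" and "\<sigma> ` S \<in> \<S>"
proof -
  have bij: "bij \<sigma>"
    using perm permutes_bij by blast
  have inv_mem: "inv \<sigma> ` R \<in> \<S>" if R: "R \<in> \<S>" for R
  proof -
    let ?\<psi> = "perm_op \<sigma> (\<lambda>x. if x \<in> \<S> then 1 else 0)"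
    have "?\<psi> \<in> code_space n \<S>"
      using preserves indicator_in_code_space[OF css] by blast
    then have "X_op R ?\<psi> {} = ?\<psi> {}"
      using R unfolding code_space_def by auto
    then show ?thesis
      using css unfolding self_dual_css_def X_op_def perm_op_def by (auto split: if_splits)
  qed
  then show "inv \<sigma> ` S \<in> \<S>"
    using S .
  have "inj_on (image (inv \<sigma>)) \<S>"
    using bij by (intro inj_on_image) (meson bij_imp_bij_inv bij_is_inj inj_on_subset subset_UNIV)
  then have "image (inv \<sigma>) ` \<S> = \<S>"
    using endo_inj_surj[OF self_dual_css_finite[OF css]] inv_mem by blast
  then obtain R where R: "R \<in> \<S>" "S = inv \<sigma> ` R"
    using S by blast
  then have "\<sigma> ` S = R"
    using bij by (simp add: image_comp bij_is_surj surj_iff[THEN iffD1])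
  with R show "\<sigma> ` S \<in> \<S>"
    by simp
qed

lemma diagonal_phase_in_code_space:
  assumes \<psi>: "\<psi> \<in> code_space n \<S>"
    and invariant: "\<And>S y. S \<in> \<S> \<Longrightarrow> \<psi> y \<noteq> 0 \<Longrightarrow> f (sym_diff y S) = f y"
  shows "(\<lambda>y. f y * \<psi> y) \<in> code_space n \<S>"
  unfolding code_space_def
proof (intro CollectI conjI ballI ext)
  show "(\<lambda>y. f y * \<psi> y) \<in> states n"
    using \<psi> unfolding code_space_def states_def by auto
next
  fix S y
  assume S: "S \<in> \<S>"
  then have X: "\<psi> (sym_diff y S) = \<psi> y" and Z: "Z_op S \<psi> y = \<psi> y"
    using \<psi> unfolding code_space_def X_op_def by (auto dest: fun_cong)
  show "X_op S (\<lambda>y. f y * \<psi> y) y = f y * \<psi> y"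
    unfolding X_op_def using X invariant[OF S, of y] by (cases "\<psi> y = 0") auto
  show "Z_op S (\<lambda>y. f y * \<psi> y) y = f y * \<psi> y"
    using Z unfolding Z_op_def by (simp add: mult.left_commute)
qed

definition cross_sign :: "nat \<Rightarrow> (nat \<Rightarrow> nat) \<Rightarrow> nat set \<Rightarrow> nat set \<Rightarrow> complex" where
  "cross_sign n \<sigma> a b = (\<Prod>i\<in>{1..n}. if i \<in> a \<and> \<sigma> i \<in> b then -1 else 1)"

lemma cross_sign_eq_power:
  "cross_sign n \<sigma> a b = (-1) ^ card {i \<in> {1..n}. i \<in> a \<and> \<sigma> i \<in> b}"
  unfolding cross_sign_def by (simp add: prod.inter_filter[symmetric])

lemma cross_sign_sym_diff_left:
  "cross_sign n \<sigma> (sym_diff a c) b = cross_sign n \<sigma> a b * cross_sign n \<sigma> c b"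
  unfolding cross_sign_def prod.distrib[symmetric] by (rule prod.cong) auto

lemma cross_sign_sym_diff_right:
  "cross_sign n \<sigma> a (sym_diff b c) = cross_sign n \<sigma> a b * cross_sign n \<sigma> a c"
  unfolding cross_sign_def prod.distrib[symmetric] by (rule prod.cong) auto

lemma cross_sign_diagonal_sym_diff:
  "cross_sign n \<sigma> (sym_diff y S) (sym_diff y S)
     = cross_sign n \<sigma> y y * cross_sign n \<sigma> y S * cross_sign n \<sigma> S y * cross_sign n \<sigma> S S"
  by (simp add: cross_sign_sym_diff_left cross_sign_sym_diff_right mult_ac)

lemma cross_sign_eq_one_left:
  assumes "bij \<sigma>" and "a \<subseteq> {1..n}" and "even (card (a \<inter> inv \<sigma> ` b))"
  shows "cross_sign n \<sigma> a b = 1"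
proof -
  have "{i \<in> {1..n}. i \<in> a \<and> \<sigma> i \<in> b} = a \<inter> inv \<sigma> ` b"
    using assms(1,2) bij_vimage_eq_inv_image[OF assms(1), of b] by auto
  with assms(3) show ?thesis
    by (simp add: cross_sign_eq_power)
qed

lemma cross_sign_eq_one_right:
  assumes "inj \<sigma>" and "a \<subseteq> {1..n}" and "even (card (b \<inter> \<sigma> ` a))"
  shows "cross_sign n \<sigma> a b = 1"
proof -
  have "{i \<in> {1..n}. i \<in> a \<and> \<sigma> i \<in> b} = a \<inter> \<sigma> -` b"
    using assms(2) by auto
  moreover have "card (a \<inter> \<sigma> -` b) = card (b \<inter> \<sigma> ` a)"
  proof -
    have "card (a \<inter> \<sigma> -` b) = card (\<sigma> ` (a \<inter> \<sigma> -` b))"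
      using assms(1) by (simp add: card_image inj_on_subset)
    also have "\<sigma> ` (a \<inter> \<sigma> -` b) = b \<inter> \<sigma> ` a"
      by auto
    finally show ?thesis .
  qed
  ultimately show ?thesis
    using assms(3) by (simp add: cross_sign_eq_power)
qed

text \<open>The fixed points of \<open>\<sigma>\<close> contribute their \<open>Z\<close> sign, the moved points their \<open>CZ\<close> sign:
together every \<open>i\<close> contributes \<open>-1\<close> exactly when \<open>i\<close> and \<open>\<sigma> i\<close> are both set in \<open>y\<close>.\<close>

lemma Z_fixed_points_U_op:
  assumes "\<psi> \<in> states n"
  shows "Z_op {i \<in> {1..n}. \<sigma> i = i} (U_op n \<sigma> \<psi>) = (\<lambda>y. cross_sign n \<sigma> y y * \<psi> y)"
proof
  fix y
  show "Z_op {i \<in> {1..n}. \<sigma> i = i} (U_op n \<sigma> \<psi>) y = cross_sign n \<sigma> y y * \<psi> y"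
  proof (cases "y \<subseteq> {1..n}")
    case False
    then show ?thesis
      using assms unfolding states_def Z_op_def U_op_def by auto
  next
    case True
    have "y \<inter> {i \<in> {1..n}. \<sigma> i = i} = {i \<in> {1..n}. \<sigma> i = i \<and> i \<in> y}"
      using True by auto
    then have Z_sign: "(-1::complex) ^ card (y \<inter> {i \<in> {1..n}. \<sigma> i = i})
        = (\<Prod>i\<in>{1..n}. if \<sigma> i = i \<and> i \<in> y then -1 else 1)"
      by (simp add: prod.inter_filter[symmetric])
    have CZ_sign: "(\<Prod>i\<in>{i \<in> {1..n}. \<sigma> i \<noteq> i}. cz_phase i (\<sigma> i) y)
        = (\<Prod>i\<in>{1..n}. if \<sigma> i \<noteq> i then cz_phase i (\<sigma> i) y else 1)"
      by (rule prod.inter_filter) simp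
    have "(-1::complex) ^ card (y \<inter> {i \<in> {1..n}. \<sigma> i = i})
        * (\<Prod>i\<in>{i \<in> {1..n}. \<sigma> i \<noteq> i}. cz_phase i (\<sigma> i) y) = cross_sign n \<sigma> y y"
      unfolding Z_sign CZ_sign cross_sign_def prod.distrib[symmetric]
      by (rule prod.cong) (auto simp: cz_phase_def)
    then show ?thesis
      unfolding Z_op_def U_op_def by (simp add: mult.assoc[symmetric])
  qed
qed

lemma cross_sign_diagonal_invariant:
  assumes css: "self_dual_css n \<S>" and perm: "\<sigma> permutes {1..n}"
    and preserves: "\<forall>\<psi>\<in>code_space n \<S>. perm_op \<sigma> \<psi> \<in> code_space n \<S>"
    and \<psi>: "\<psi> \<in> code_space n \<S>" and S: "S \<in> \<S>" and y: "\<psi> y \<noteq> 0"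
  shows "cross_sign n \<sigma> (sym_diff y S) (sym_diff y S) = cross_sign n \<sigma> y y"
proof -
  have bij: "bij \<sigma>"
    using perm permutes_bij by blast
  have y_sub: "y \<subseteq> {1..n}"
    using code_space_support_subset[OF \<psi> y] .
  have S_sub: "S \<subseteq> {1..n}"
    using css S unfolding self_dual_css_def by blast
  note images = code_preserving_permutation_image[OF css perm preserves S]
  have "cross_sign n \<sigma> y S = 1"
    using bij y_sub code_space_support_orthogonal[OF \<psi> images(1) y]
    by (rule cross_sign_eq_one_left)
  moreover have "cross_sign n \<sigma> S y = 1"
    using bij_is_inj[OF bij] S_sub code_space_support_orthogonal[OF \<psi> images(2) y]
    by (rule cross_sign_eq_one_right)
  moreover have "cross_sign n \<sigma> S S = 1"
    using bij S_sub self_dual_css_orthogonal[OF css S images(1)]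
    by (rule cross_sign_eq_one_left)
  ultimately show ?thesis
    by (simp add: cross_sign_diagonal_sym_diff)
qed

theorem claim2:
  fixes n :: nat and \<S> :: "nat set set" and \<sigma> :: "nat \<Rightarrow> nat"
  assumes "self_dual_css n \<S>"
    and "\<sigma> permutes {1..n}"
    and "\<forall>\<psi>\<in>code_space n \<S>. perm_op \<sigma> \<psi> \<in> code_space n \<S>"
  shows "\<exists>T. T \<subseteq> {1..n} \<and>
           (\<forall>\<psi>\<in>code_space n \<S>. Z_op T (U_op n \<sigma> \<psi>) \<in> code_space n \<S>)"
proof (intro exI conjI ballI)
  show "{i \<in> {1..n}. \<sigma> i = i} \<subseteq> {1..n}"
    by blast
next
  fix \<psi>
  assume \<psi>: "\<psi> \<in> code_space n \<S>"
  then have "\<psi> \<in> states n"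
    unfolding code_space_def by blast
  moreover have "(\<lambda>y. cross_sign n \<sigma> y y * \<psi> y) \<in> code_space n \<S>"
    using \<psi> cross_sign_diagonal_invariant[OF assms \<psi>] by (rule diagonal_phase_in_code_space)
  ultimately show "Z_op {i \<in> {1..n}. \<sigma> i = i} (U_op n \<sigma> \<psi>) \<in> code_space n \<S>"
    by (simp only: Z_fixed_points_U_op)
qed

end
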